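(* Suppose monotone treatment response and monotone treatment selection hold. Then under Design 1, for all $x\in\mathcal X$, $\Gamma(x,p_0)\le\Gamma(x,0)$.
   Context: Population variables: $Y^*\in\{0,1\}$ (outcome), $T^*\in\{0,1\}$ (treatment), $X^*$ (covariate vector); potential outcomes $Y^*(1),Y^*(0)\in\{0,1\}$ satisfy $Y^*=T^*Y^*(1)+(1-T^* )Y^*(0)$; $p_0:=\Pr(Y^*=1)$. The observed vector $(Y,T,X)$ arises from Bernoulli sampling: $Y\in\{0,1\}$ is drawn with known probability $h_0:=\Pr(Y=1)\in(0,1)$, and given $Y=y$, $(T,X)$ is drawn from a distribution $\mathcal P_y$. Design 1 (case-control): for all $t\in\{0,1\}$, $x\in\mathcal X$, $y\in\{0,1\}$, $f_{X|Y}(x\mid y)=f_{X^*|Y^*}(x\mid y)$ and $\Pr(T=t\mid X=x,Y=y)=\Pr(T^*=t\mid X^*=x,Y^*=y)$, where $f$ denotes densities (or mass functions). Standing common support assumption: the support of $X^*$ and that of $X$ given $Y=y$ for $y=0,1$ coincide; call it $\mathcal X$. Let $\Pi(t\mid y,x):=\Pr(T=t\mid Y=y,X=x)$, assumed nonzero for all $t,y$. For $p\in[0,1]$, $r(x,p):=\frac{p(1-h_0)\Pr(Y=1\mid X=x)}{p(1-h_0)\Pr(Y=1\mid X=x)+h_0(1-p)\Pr(Y=0\mid X=x)}$ and $\Gamma(x,p):=\frac{\Pi(1\mid 1,x)}{\Pi(0\mid 1,x)}\cdot\frac{\Pi(0\mid 0,x)+r(x,p)\{\Pi(0\mid 1,x)-\Pi(0\mid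 0,x)\}}{\Pi(1\mid 0,x)+r(x,p)\{\Pi(1\mid 1,x)-\Pi(1\mid 0,x)\}}$. Monotone treatment response: $Y^*(1)\ge Y^*(0)$ almost surely. Monotone treatment selection: for all $t\in\{0,1\}$, $x\in\mathcal X$, $\Pr\{Y^*(t)=1\mid T^*=1,X^*=x\}\ge\Pr\{Y^*(t)=1\mid T^*=0,X^*=x\}$. *)

theory Defs
  imports "HOL-Analysis.Analysis"
begin

text \<open>
The joint law of (Y*(1), Y*(0), T*, X*) is given by a density
g y1 y0 t x with respect to (counting measure on bool^3) times a base measure mu
on the covariate space (mu = counting measure gives discrete covariates, mu = Lebesgue
measure gives continuous ones).  Binary variables are encoded as bool (True = 1).
\<close>

definition ystar :: "bool \<Rightarrow> bool \<Rightarrow> bool \<Rightarrow> bool" where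
  "ystar t y1 y0 = (if t then y1 else y0)"

definition popYTX :: "(bool \<Rightarrow> bool \<Rightarrow> bool \<Rightarrow> 'x \<Rightarrow> real) \<Rightarrow> bool \<Rightarrow> bool \<Rightarrow> 'x \<Rightarrow> real" where
  "popYTX g y t x = (\<Sum>y1\<in>UNIV. \<Sum>y0\<in>UNIV. if ystar t y1 y0 = y then g y1 y0 t x else 0)"

definition popYX :: "(bool \<Rightarrow> bool \<Rightarrow> bool \<Rightarrow> 'x \<Rightarrow> real) \<Rightarrow> bool \<Rightarrow> 'x \<Rightarrow> real" where
  "popYX g y x = popYTX g y True x + popYTX g y False x"

definition popX :: "(bool \<Rightarrow> bool \<Rightarrow> bool \<Rightarrow> 'x \<Rightarrow> real) \<Rightarrow> 'x \<Rightarrow> real" where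
  "popX g x = popYX g True x + popYX g False x"

definition p0 :: "'x measure \<Rightarrow> (bool \<Rightarrow> bool \<Rightarrow> bool \<Rightarrow> 'x \<Rightarrow> real) \<Rightarrow> real" where
  "p0 \<mu> g = (\<integral>x. popYX g True x \<partial>\<mu>)"

definition f_Xstar_given_Ystar ::
  "'x measure \<Rightarrow> (bool \<Rightarrow> bool \<Rightarrow> bool \<Rightarrow> 'x \<Rightarrow> real) \<Rightarrow> 'x \<Rightarrow> bool \<Rightarrow> real" where
  "f_Xstar_given_Ystar \<mu> g x y = popYX g y x / (if y then p0 \<mu> g else 1 - p0 \<mu> g)"

definition Pr_Tstar_given_XY ::
  "(bool \<Rightarrow> bool \<Rightarrow> bool \<Rightarrow> 'x \<Rightarrow> real) \<Rightarrow> bool \<Rightarrow> 'x \<Rightarrow> bool \<Rightarrow> real" where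
  "Pr_Tstar_given_XY g t x y = popYTX g y t x / popYX g y x"

definition Pr_Ypot_given_TX ::
  "(bool \<Rightarrow> bool \<Rightarrow> bool \<Rightarrow> 'x \<Rightarrow> real) \<Rightarrow> bool \<Rightarrow> bool \<Rightarrow> 'x \<Rightarrow> real" where
  "Pr_Ypot_given_TX g t t' x =
     (\<Sum>y1\<in>UNIV. \<Sum>y0\<in>UNIV. if (if t then y1 else y0) then g y1 y0 t' x else 0)
     / (\<Sum>y1\<in>UNIV. \<Sum>y0\<in>UNIV. g y1 y0 t' x)"

definition suppX :: "(bool \<Rightarrow> bool \<Rightarrow> bool \<Rightarrow> 'x \<Rightarrow> real) \<Rightarrow> 'x set" where
  "suppX g = {x. popX g x > 0}"

text \<open>
Observed model.  fo y t x is the density (w.r.t. counting measure on T times mu) of the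
distribution P_y of (T, X) given Y = y; h0 = Pr(Y = 1).
\<close>

definition f_X_given_Y :: "(bool \<Rightarrow> bool \<Rightarrow> 'x \<Rightarrow> real) \<Rightarrow> 'x \<Rightarrow> bool \<Rightarrow> real" where
  "f_X_given_Y fo x y = fo y True x + fo y False x"

definition Pi :: "(bool \<Rightarrow> bool \<Rightarrow> 'x \<Rightarrow> real) \<Rightarrow> bool \<Rightarrow> bool \<Rightarrow> 'x \<Rightarrow> real" where
  "Pi fo t y x = fo y t x / f_X_given_Y fo x y"

definition Pr_Y_given_X :: "real \<Rightarrow> (bool \<Rightarrow> bool \<Rightarrow> 'x \<Rightarrow> real) \<Rightarrow> bool \<Rightarrow> 'x \<Rightarrow> real" where
  "Pr_Y_given_X h0 fo y x =
     (if y then h0 else 1 - h0) * f_X_given_Y fo x y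
     / (h0 * f_X_given_Y fo x True + (1 - h0) * f_X_given_Y fo x False)"

definition rfun :: "real \<Rightarrow> (bool \<Rightarrow> bool \<Rightarrow> 'x \<Rightarrow> real) \<Rightarrow> 'x \<Rightarrow> real \<Rightarrow> real" where
  "rfun h0 fo x p =
     p * (1 - h0) * Pr_Y_given_X h0 fo True x
     / (p * (1 - h0) * Pr_Y_given_X h0 fo True x + h0 * (1 - p) * Pr_Y_given_X h0 fo False x)"

definition Gamma :: "real \<Rightarrow> (bool \<Rightarrow> bool \<Rightarrow> 'x \<Rightarrow> real) \<Rightarrow> 'x \<Rightarrow> real \<Rightarrow> real" where
  "Gamma h0 fo x p =
     (Pi fo True True x / Pi fo False True x) *
     ((Pi fo False False x + rfun h0 fo x p * (Pi fo False True x - Pi fo False False x))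
      / (Pi fo True False x + rfun h0 fo x p * (Pi fo True True x - Pi fo True False x)))"

end

theory Submission
  imports Defs
begin

text \<open>
  Under monotone treatment response the joint law of (Y*(1), Y*(0)) puts no mass on (0, 1), so
  the treatment probabilities among cases and controls, and the potential-outcome probabilities
  entering monotone treatment selection, are ratios of five nonnegative cell masses.  In these
  terms monotone treatment selection for Y*(1) forces Pr(T* = 1 | X*, Y* = 0) to be at most
  Pr(T* = 1 | X*, Y* = 1).  Writing \<Gamma>(x, p) as an odds (1 - q)/q times a constant, with
  q = \<Pi>(1|0,x) + r(x,p) (\<Pi>(1|1,x) - \<Pi>(1|0,x)), the odds can only decrease as r grows from
  r(x,0) = 0, and Design 1 identifies \<Pi> with the population treatment probabilities.
\<close>

lemma ratio_le_of_monotone_selection: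
  fixes a b c d e :: real
  assumes "0 < a" "0 < b" "0 \<le> c" "0 \<le> d" "0 \<le> e"
    and mts: "(c + d) / (c + d + e) \<le> a / (a + b)"
  shows "b / (b + d + e) \<le> a / (a + c)"
proof -
  have "b * (c + d) \<le> a * e"
  proof (cases "c + d + e = 0")
    case True
    then have "c = 0" "d = 0" using assms by linarith+
    then show ?thesis using assms by simp
  next
    case False
    then have "(c + d) * (a + b) \<le> a * (c + d + e)"
      using mts assms by (simp add: divide_le_eq le_divide_eq)
    then show ?thesis by (simp add: algebra_simps)
  qed
  moreover have "b * c \<le> b * (c + d)" "0 \<le> a * d" using assms by simp_all
  ultimately have "b * (a + c) \<le> a * (b + d + e)" by (simp add: algebra_simps)
  then show ?thesis using assms by (simp add: divide_le_eq le_divide_eq)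
qed

lemma Pr_Tstar_given_XY_controls_le_cases:
  assumes g_nonneg: "\<And>y1 y0 t. 0 \<le> g y1 y0 t x"
    and MTR: "\<And>t. g False True t x = 0"
    and MTS: "Pr_Ypot_given_TX g True False x \<le> Pr_Ypot_given_TX g True True x"
    and pos: "\<And>y. 0 < Pr_Tstar_given_XY g True x y"
  shows "Pr_Tstar_given_XY g True x False \<le> Pr_Tstar_given_XY g True x True"
proof -
  txt \<open>Cell masses at x: a is T* = 1, Y*(1) = 1; b is T* = 1, Y* = 0; c, d, e are T* = 0 with
    (Y*(1), Y*(0)) = (1, 1), (1, 0), (0, 0).\<close>
  define a where "a = g True True True x + g True False True x"
  define b where "b = g False False True x"
  define c where "c = g True True False x"
  define d where "d = g True False False x"
  define e where "e = g False False False x"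
  have cases: "Pr_Tstar_given_XY g True x True = a / (a + c)"
    using MTR[of True] MTR[of False]
    by (simp add: Pr_Tstar_given_XY_def popYX_def popYTX_def ystar_def UNIV_bool
        a_def c_def algebra_simps)
  have controls: "Pr_Tstar_given_XY g True x False = b / (b + d + e)"
    using MTR[of True] MTR[of False]
    by (simp add: Pr_Tstar_given_XY_def popYX_def popYTX_def ystar_def UNIV_bool
        b_def d_def e_def algebra_simps)
  have mts: "(c + d) / (c + d + e) \<le> a / (a + b)"
    using MTS MTR[of True] MTR[of False]
    by (simp add: Pr_Ypot_given_TX_def UNIV_bool a_def b_def c_def d_def e_def algebra_simps)
  have nonneg: "0 \<le> a" "0 \<le> b" "0 \<le> c" "0 \<le> d" "0 \<le> e"
    unfolding a_def b_def c_def d_def e_def using g_nonneg by (simp_all add: add_nonneg_nonneg)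
  have a_pos: "0 < a"
    using pos[of True] nonneg unfolding cases by (auto simp: zero_less_divide_iff)
  have b_pos: "0 < b"
    using pos[of False] nonneg unfolding controls by (auto simp: zero_less_divide_iff)
  show ?thesis
    unfolding cases controls using ratio_le_of_monotone_selection[OF a_pos b_pos nonneg(3-5) mts] .
qed

lemma Pi_nonneg:
  assumes "\<And>y t. 0 \<le> fo y t x"
  shows "0 \<le> Pi fo t y x"
  using assms by (simp add: Pi_def f_X_given_Y_def)

lemma Pi_False_eq:
  assumes "f_X_given_Y fo x y \<noteq> 0"
  shows "Pi fo False y x = 1 - Pi fo True y x"
  using assms by (simp add: Pi_def f_X_given_Y_def field_simps)

lemma rfun_nonneg:
  assumes "\<And>y t. 0 \<le> fo y t x" "0 \<le> h0" "h0 \<le> 1" "0 \<le> p" "p \<le> 1"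
  shows "0 \<le> rfun h0 fo x p"
proof -
  have "0 \<le> f_X_given_Y fo x y" for y
    using assms(1) by (simp add: f_X_given_Y_def)
  then have "0 \<le> Pr_Y_given_X h0 fo y x" for y
    using assms(2,3) by (simp add: Pr_Y_given_X_def)
  then show ?thesis
    using assms(2-5) by (simp add: rfun_def)
qed

lemma odds_antimono:
  fixes q q' :: real
  assumes "0 < q" "q \<le> q'"
  shows "(1 - q') / q' \<le> (1 - q) / q"
  using assms by (simp add: divide_le_eq le_divide_eq frac_le_eq) (simp add: algebra_simps)

lemma Gamma_le_Gamma_zero:
  assumes fo_nonneg: "\<And>y t. 0 \<le> fo y t x"
    and f_pos: "\<And>y. 0 < f_X_given_Y fo x y"
    and controls_pos: "0 < Pi fo True False x"
    and controls_le_cases: "Pi fo True False x \<le> Pi fo True True x"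
    and r_nonneg: "0 \<le> rfun h0 fo x p"
  shows "Gamma h0 fo x p \<le> Gamma h0 fo x 0"
proof -
  define k where "k = Pi fo True True x / Pi fo False True x"
  define q where "q = Pi fo True False x + rfun h0 fo x p * (Pi fo True True x - Pi fo True False x)"
  have Pi_False: "Pi fo False y x = 1 - Pi fo True y x" for y
    using f_pos[of y] by (simp add: Pi_False_eq)
  have "Gamma h0 fo x p = k * ((1 - q) / q)"
    unfolding Gamma_def k_def q_def Pi_False by (simp add: algebra_simps)
  moreover have "Gamma h0 fo x 0 = k * ((1 - Pi fo True False x) / Pi fo True False x)"
    unfolding Gamma_def k_def Pi_False by (simp add: rfun_def)
  moreover have "0 \<le> k"
    unfolding k_def using Pi_nonneg[of fo x, OF fo_nonneg] by simp
  moreover have "Pi fo True False x \<le> q"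
    unfolding q_def using controls_le_cases r_nonneg by simp
  then have "(1 - q) / q \<le> (1 - Pi fo True False x) / Pi fo True False x"
    using controls_pos by (rule odds_antimono[rotated])
  ultimately show ?thesis
    by (metis mult_left_mono)
qed

theorem lemmaA6:
  fixes \<mu> :: "'x measure"
    and g :: "bool \<Rightarrow> bool \<Rightarrow> bool \<Rightarrow> 'x \<Rightarrow> real"
    and fo :: "bool \<Rightarrow> bool \<Rightarrow> 'x \<Rightarrow> real"
    and h0 :: real
  assumes g_nonneg: "\<And>y1 y0 t x. g y1 y0 t x \<ge> 0"
    and g_int: "\<And>y1 y0 t. integrable \<mu> (g y1 y0 t)"
    and g_norm: "(\<Sum>y1\<in>UNIV. \<Sum>y0\<in>UNIV. \<Sum>t\<in>UNIV. \<integral>x. g y1 y0 t x \<partial>\<mu>) = 1"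
    and p0_range: "0 < p0 \<mu> g" "p0 \<mu> g < 1"
    and h0_range: "0 < h0" "h0 < 1"
    and fo_nonneg: "\<And>y t x. fo y t x \<ge> 0"
    and fo_int: "\<And>y t. integrable \<mu> (fo y t)"
    and fo_norm: "\<And>y. (\<Sum>t\<in>UNIV. \<integral>x. fo y t x \<partial>\<mu>) = 1"
    and common_support: "\<And>y. {x. f_X_given_Y fo x y > 0} = suppX g"
    and Pi_nonzero: "\<And>t y x. x \<in> suppX g \<Longrightarrow> Pi fo t y x \<noteq> 0"
    and design1_X: "\<And>x y. x \<in> suppX g \<Longrightarrow> f_X_given_Y fo x y = f_Xstar_given_Ystar \<mu> g x y"
    and design1_T: "\<And>t x y. x \<in> suppX g \<Longrightarrow> Pi fo t y x = Pr_Tstar_given_XY g t x y"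
    and MTR: "\<And>t x. g False True t x = 0"
    and MTS: "\<And>t x. x \<in> suppX g \<Longrightarrow> Pr_Ypot_given_TX g t True x \<ge> Pr_Ypot_given_TX g t False x"
  shows "\<forall>x\<in>suppX g. Gamma h0 fo x (p0 \<mu> g) \<le> Gamma h0 fo x 0"
proof
  fix x assume x: "x \<in> suppX g"
  have Pi_pos: "0 < Pi fo True y x" for y
    using Pi_nonneg[of fo x, OF fo_nonneg] Pi_nonzero[OF x] by (simp add: order_le_less)
  have "Pi fo True False x \<le> Pi fo True True x"
    using Pr_Tstar_given_XY_controls_le_cases[OF g_nonneg MTR MTS[OF x]] Pi_pos
    by (simp add: design1_T[OF x])
  moreover have "0 < f_X_given_Y fo x y" for y
    using common_support[of y] x by blast
  moreover have "0 \<le> rfun h0 fo x (p0 \<mu> g)"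
    using rfun_nonneg[of fo x, OF fo_nonneg] h0_range p0_range by simp
  ultimately show "Gamma h0 fo x (p0 \<mu> g) \<le> Gamma h0 fo x 0"
    using Gamma_le_Gamma_zero[of fo x, OF fo_nonneg] Pi_pos by blast
qed

end
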